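(* Assume $\sup_{t\in\mathbb R}\int_H\|x\|\,\nu_t(dx)<\infty$. Then for every $u\in K$ and every fixed $x\in H$, $$\lim_{\tau\to\infty}\sup_{t\in\mathbb R}\big|P_\tau u(t,x)-\overline u_{t+\tau}\big|=0,\qquad\text{where }\overline u_t:=\int_Hu(t,y)\,\nu_t(dy).$$
   Context: Setting: $H$ real separable Hilbert space; $L$ an $H$-valued Lévy process with Lévy measure $M$ satisfying $\int_{\|x\|>1}\|x\|M(dx)<\infty$; $f$, $B$, $A(t)$ $T$-periodic coefficients ($f$ continuous, $B$ strongly continuous and norm bounded, $A(t)$ with common domain) with evolution family $U(t,s)$, $\|U(t,s)\|\le ce^{-\omega(t-s)}$ ($c,\omega>0$); the adjoints $A^*(t)$ have a common dense domain $D(A^* )$ with $U(t,s)^*D(A^* )\subset D(A^* )$ and $\frac d{dt}U(t,s)^*y=U(t,s)^*A^*(t)y$. $X(t,s,x)=U(t,s)x+\int_s^tU(t,r)f(r)dr+\int_s^tU(t,r)B(r)dL_r$, $P(s,t)\varphi(x)=\mathbb E\varphi(X(t,s,x))$, $P_\tau u(t,x):=(P(t,t+\tau)u(t+\tau,\cdot))(x)$. $(\nu_t)_{t\in\mathbb R}$ is the unique $T$-periodic evolution system of measures (Borel probability measures with $\int P(s,t)\varphi\,d\nu_s=\int\varphi\,d\nu_t$ for $s<t$). $K$: real parts of the complex span of $(t,x)\mapsto\Phi(t)e^{i\langle x,h(t)\rangle}$, $\Phi\in C^1(\mathbb R,\mathbb R)$ and $h\in C^1(\mathbb R,H)$ $T$-periodic,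 $h$ with values in $D(A^* )$. *)

theory Defs
  imports "HOL-Probability.Probability"
begin

text \<open>A real separable Hilbert space is modelled by a type of sort
  real_inner, complete_space, second_countable_topology (separable metric = second countable).\<close>

definition increments_indep ::
  "'w measure \<Rightarrow> (real \<Rightarrow> 'w \<Rightarrow> 'h::{real_inner, complete_space, second_countable_topology}) \<Rightarrow> bool" where
  "increments_indep \<Omega> L \<longleftrightarrow>
     (\<forall>(ts::nat \<Rightarrow> real) n. strict_mono ts \<longrightarrow>
        prob_space.indep_vars \<Omega> (\<lambda>_. borel) (\<lambda>i \<omega>. L (ts (Suc i)) \<omega> - L (ts i) \<omega>) {..<n})"

definition levy_process ::
  "'w measure \<Rightarrow> (real \<Rightarrow> 'w \<Rightarrow> 'h::{real_inner, complete_space, second_countable_topology}) \<Rightarrow> bool" where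
  "levy_process \<Omega> L \<longleftrightarrow>
     prob_space \<Omega>
   \<and> (\<forall>t. L t \<in> borel_measurable \<Omega>)
   \<and> (\<forall>\<omega>\<in>space \<Omega>. L 0 \<omega> = 0)
   \<and> increments_indep \<Omega> L
   \<and> (\<forall>s t. s \<le> t \<longrightarrow>
        distr \<Omega> borel (\<lambda>\<omega>. L t \<omega> - L s \<omega>) = distr \<Omega> borel (\<lambda>\<omega>. L (t - s) \<omega> - L 0 \<omega>))
   \<and> (\<forall>\<omega>\<in>space \<Omega>. \<forall>t. continuous (at_right t) (\<lambda>r. L r \<omega>)
                         \<and> (\<exists>l. ((\<lambda>r. L r \<omega>) \<longlongrightarrow> l) (at_left t)))"

definition jump :: "(real \<Rightarrow> 'w \<Rightarrow> 'h::real_normed_vector) \<Rightarrow> 'w \<Rightarrow> real \<Rightarrow> 'h" where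
  "jump L \<omega> s = L s \<omega> - Lim (at_left s) (\<lambda>r. L r \<omega>)"

definition levy_measure ::
  "'w measure \<Rightarrow> (real \<Rightarrow> 'w \<Rightarrow> 'h::{real_inner, complete_space, second_countable_topology}) \<Rightarrow> 'h measure" where
  "levy_measure \<Omega> L = measure_of UNIV (sets borel)
     (\<lambda>A. \<integral>\<^sup>+\<omega>. emeasure (count_space UNIV) {s\<in>{0<..1}. jump L \<omega> s \<in> A - {0}} \<partial>\<Omega>)"

definition riemann_sum ::
  "(real \<Rightarrow> 'w \<Rightarrow> 'h::real_normed_vector) \<Rightarrow> (real \<Rightarrow> 'h \<Rightarrow>\<^sub>L 'h) \<Rightarrow> real \<Rightarrow> real \<Rightarrow> nat \<Rightarrow> 'w \<Rightarrow> 'h" where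
  "riemann_sum L G s t n \<omega> =
     (\<Sum>k<n. G (s + real k * (t - s) / real n)
               (L (s + real (Suc k) * (t - s) / real n) \<omega> - L (s + real k * (t - s) / real n) \<omega>))"

definition stoch_int ::
  "'w measure \<Rightarrow> (real \<Rightarrow> 'w \<Rightarrow> 'h::{real_inner, complete_space, second_countable_topology})
     \<Rightarrow> (real \<Rightarrow> 'h \<Rightarrow>\<^sub>L 'h) \<Rightarrow> real \<Rightarrow> real \<Rightarrow> 'w \<Rightarrow> 'h" where
  "stoch_int \<Omega> L G s t = (SOME I. I \<in> borel_measurable \<Omega> \<and>
      (\<forall>e>0. (\<lambda>n. measure \<Omega> {\<omega>\<in>space \<Omega>. norm (riemann_sum L G s t n \<omega> - I \<omega>) > e})
               \<longlonglongrightarrow> 0))"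

definition OU_proc ::
  "'w measure \<Rightarrow> (real \<Rightarrow> 'w \<Rightarrow> 'h::{real_inner, complete_space, second_countable_topology})
    \<Rightarrow> (real \<Rightarrow> real \<Rightarrow> 'h \<Rightarrow>\<^sub>L 'h) \<Rightarrow> (real \<Rightarrow> 'h) \<Rightarrow> (real \<Rightarrow> 'h \<Rightarrow>\<^sub>L 'h)
    \<Rightarrow> real \<Rightarrow> real \<Rightarrow> 'h \<Rightarrow> 'w \<Rightarrow> 'h" where
  "OU_proc \<Omega> L U f B t s x \<omega> =
     U t s x + integral {s..t} (\<lambda>r. U t r (f r)) + stoch_int \<Omega> L (\<lambda>r. U t r o\<^sub>L B r) s t \<omega>"

definition trans_op ::
  "'w measure \<Rightarrow> (real \<Rightarrow> 'w \<Rightarrow> 'h::{real_inner, complete_space, second_countable_topology})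
    \<Rightarrow> (real \<Rightarrow> real \<Rightarrow> 'h \<Rightarrow>\<^sub>L 'h) \<Rightarrow> (real \<Rightarrow> 'h) \<Rightarrow> (real \<Rightarrow> 'h \<Rightarrow>\<^sub>L 'h)
    \<Rightarrow> real \<Rightarrow> real \<Rightarrow> ('h \<Rightarrow> real) \<Rightarrow> 'h \<Rightarrow> real" where
  "trans_op \<Omega> L U f B s t \<phi> x = (\<integral>\<omega>. \<phi> (OU_proc \<Omega> L U f B t s x \<omega>) \<partial>\<Omega>)"

definition P_tau ::
  "'w measure \<Rightarrow> (real \<Rightarrow> 'w \<Rightarrow> 'h::{real_inner, complete_space, second_countable_topology})
    \<Rightarrow> (real \<Rightarrow> real \<Rightarrow> 'h \<Rightarrow>\<^sub>L 'h) \<Rightarrow> (real \<Rightarrow> 'h) \<Rightarrow> (real \<Rightarrow> 'h \<Rightarrow>\<^sub>L 'h)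
    \<Rightarrow> real \<Rightarrow> (real \<Rightarrow> 'h \<Rightarrow> real) \<Rightarrow> real \<Rightarrow> 'h \<Rightarrow> real" where
  "P_tau \<Omega> L U f B \<tau> u t x = trans_op \<Omega> L U f B t (t + \<tau>) (u (t + \<tau>)) x"

definition evolution_system_of_measures ::
  "'w measure \<Rightarrow> (real \<Rightarrow> 'w \<Rightarrow> 'h::{real_inner, complete_space, second_countable_topology})
    \<Rightarrow> (real \<Rightarrow> real \<Rightarrow> 'h \<Rightarrow>\<^sub>L 'h) \<Rightarrow> (real \<Rightarrow> 'h) \<Rightarrow> (real \<Rightarrow> 'h \<Rightarrow>\<^sub>L 'h)
    \<Rightarrow> (real \<Rightarrow> 'h measure) \<Rightarrow> bool" where
  "evolution_system_of_measures \<Omega> L U f B \<nu> \<longleftrightarrow>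
     (\<forall>t. prob_space (\<nu> t) \<and> sets (\<nu> t) = sets borel)
   \<and> (\<forall>s t (\<phi>::'h \<Rightarrow> real). s < t \<longrightarrow> continuous_on UNIV \<phi> \<longrightarrow> bounded (range \<phi>) \<longrightarrow>
        (\<integral>x. trans_op \<Omega> L U f B s t \<phi> x \<partial>\<nu> s) = (\<integral>x. \<phi> x \<partial>\<nu> t))"

definition C1_fun :: "(real \<Rightarrow> 'a::real_normed_vector) \<Rightarrow> bool" where
  "C1_fun g \<longleftrightarrow> (\<exists>g'. continuous_on UNIV g' \<and> (\<forall>t. (g has_vector_derivative g' t) (at t)))"

definition periodic :: "real \<Rightarrow> (real \<Rightarrow> 'a) \<Rightarrow> bool" where
  "periodic T g \<longleftrightarrow> (\<forall>t. g (t + T) = g t)"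

text \<open>K: real parts of finite complex linear combinations of
  \<open>(t,x) \<mapsto> \<Phi>(t) e^{i<x,h(t)>}\<close>, with \<open>\<Phi>\<close>, h C^1 and T-periodic, h with values in D(A*).\<close>
definition in_K :: "real \<Rightarrow> 'h set \<Rightarrow> (real \<Rightarrow> 'h::real_inner \<Rightarrow> real) \<Rightarrow> bool" where
  "in_K T DAs u \<longleftrightarrow>
     (\<exists>(J::nat set) (c::nat \<Rightarrow> complex) (\<Phi>::nat \<Rightarrow> real \<Rightarrow> real) (h::nat \<Rightarrow> real \<Rightarrow> 'h).
        finite J
      \<and> (\<forall>j\<in>J. C1_fun (\<Phi> j) \<and> periodic T (\<Phi> j) \<and> C1_fun (h j) \<and> periodic T (h j)
               \<and> (\<forall>t. h j t \<in> DAs))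
      \<and> (\<forall>t x. u t x = Re (\<Sum>j\<in>J. c j * complex_of_real (\<Phi> j t) * cis (x \<bullet> h j t))))"

end

theory Submission
  imports Defs "HOL-Library.Periodic_Fun"
begin

text \<open>
  Write X(t + \<tau>, t, y) = W y + S with W = U(t + \<tau>, t) and a noise term S that does not
  depend on y. The invariance identity of the evolution system of measures says that averaging
  the laws of W y + S over y \<sim> \<nu>_t gives \<nu>_{t+\<tau>}. Hence, for a bounded K-Lipschitz \<phi>,
  E \<phi>(W x + S) - \<integral> \<phi> d\<nu>_{t+\<tau>} is the deviation of the (K |W|)-Lipschitz function
  y \<mapsto> E \<phi>(W y + S) from its \<nu>_t-mean, which is at most K |W| (|x| + \<integral> |y| d\<nu>_t).
  With |W| \<le> c e^{-\<omega>\<tau>} and the uniform first-moment bound this tends to 0 uniformly in t.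
\<close>

text \<open>The unit circle parametrisation is 1-Lipschitz:
  |cis a - cis b| = |cis (a - b) - 1| = 2 |sin ((a - b) / 2)|.\<close>
lemma norm_cis_diff_le: "cmod (cis a - cis b) \<le> \<bar>a - b\<bar>"
proof -
  have "cis a - cis b = cis b * (cis (a - b) - 1)"
    by (simp add: right_diff_distrib cis_mult)
  also have "cis (a - b) = exp (\<i> * of_real (a - b))"
    by (simp add: cis_conv_exp)
  finally have "cmod (cis a - cis b) = 2 * \<bar>sin ((a - b) / 2)\<bar>"
    by (simp only: norm_mult norm_cis dist_exp_i_1 mult_1)
  also have "\<dots> \<le> 2 * \<bar>(a - b) / 2\<bar>"
    using abs_sin_x_le_abs_x[of "(a - b) / 2"] by simp
  finally show ?thesis by simp
qed

text \<open>A continuous periodic function takes all its values on one period, a compact interval,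
  and is therefore bounded.\<close>
lemma periodic_continuous_bounded:
  fixes g :: "real \<Rightarrow> 'a::real_normed_vector"
  assumes "T > 0" and "continuous_on UNIV g" and "periodic T g"
  shows "\<exists>B. \<forall>t. norm (g t) \<le> B"
proof -
  interpret periodic_fun_simple g T
    using assms(3) by unfold_locales (simp add: periodic_def)
  have "g t \<in> g ` {0..T}" for t
  proof
    define k where "k = \<lfloor>t / T\<rfloor>"
    show "g t = g (t - of_int k * T)"
      using plus_of_int[of "t - of_int k * T" k] by simp
    have "of_int k \<le> t / T" "t / T < of_int k + 1"
      unfolding k_def by linarith+
    then have "of_int k * T \<le> t" "t < (of_int k + 1) * T"
      using assms(1) by (simp_all add: field_simps)
    then show "t - of_int k * T \<in> {0..T}" by (simp add: algebra_simps)
  qed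
  moreover have "compact (g ` {0..T})"
    using assms(2) by (intro compact_continuous_image) (auto intro: continuous_on_subset)
  ultimately show ?thesis
    using compact_imp_bounded bounded_iff by (metis image_subset_iff)
qed

lemma C1_fun_continuous: "C1_fun g \<Longrightarrow> continuous_on UNIV g"
  unfolding C1_fun_def
  by (metis continuous_at_imp_continuous_on has_vector_derivative_continuous)

lemma plane_wave_lipschitz:
  fixes h z z' :: "'h::real_inner"
  shows "cmod (w * cis (z \<bullet> h) - w * cis (z' \<bullet> h)) \<le> cmod w * norm h * norm (z - z')"
proof -
  have "cmod (w * cis (z \<bullet> h) - w * cis (z' \<bullet> h)) = cmod w * cmod (cis (z \<bullet> h) - cis (z' \<bullet> h))"
    by (simp flip: norm_mult add: right_diff_distrib)
  also have "\<dots> \<le> cmod w * \<bar>(z - z') \<bullet> h\<bar>"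
    using norm_cis_diff_le[of "z \<bullet> h" "z' \<bullet> h"] by (intro mult_left_mono) (auto simp: inner_diff_left)
  also have "\<dots> \<le> cmod w * (norm h * norm (z - z'))"
    using Cauchy_Schwarz_ineq2[of "z - z'" h] by (intro mult_left_mono) (auto simp: mult.commute)
  finally show ?thesis by (simp add: mult.assoc)
qed

lemma wave_sum_bounded_lipschitz:
  fixes w :: "'j \<Rightarrow> complex" and h :: "'j \<Rightarrow> 'h::real_inner"
  assumes w: "\<And>j. j \<in> J \<Longrightarrow> cmod (w j) \<le> a j" and h: "\<And>j. j \<in> J \<Longrightarrow> norm (h j) \<le> b j"
  shows "(\<Sum>j\<in>J. a j * b j)-lipschitz_on UNIV (\<lambda>z. Re (\<Sum>j\<in>J. w j * cis (z \<bullet> h j)))"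
    and "\<bar>Re (\<Sum>j\<in>J. w j * cis (z \<bullet> h j))\<bar> \<le> (\<Sum>j\<in>J. a j)"
proof -
  have a0: "0 \<le> a j" and b0: "0 \<le> b j" if "j \<in> J" for j
    using w[OF that] h[OF that] norm_ge_zero[of "w j"] norm_ge_zero[of "h j"] by linarith+
  have "\<bar>Re (\<Sum>j\<in>J. w j * cis (z \<bullet> h j)) - Re (\<Sum>j\<in>J. w j * cis (z' \<bullet> h j))\<bar>
          \<le> (\<Sum>j\<in>J. a j * b j) * dist z z'" for z z'
  proof -
    have "\<bar>Re (\<Sum>j\<in>J. w j * cis (z \<bullet> h j)) - Re (\<Sum>j\<in>J. w j * cis (z' \<bullet> h j))\<bar>
        \<le> cmod (\<Sum>j\<in>J. w j * cis (z \<bullet> h j) - w j * cis (z' \<bullet> h j))"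
      unfolding minus_complex.sel(1)[symmetric] sum_subtractf[symmetric] by (rule abs_Re_le_cmod)
    also have "\<dots> \<le> (\<Sum>j\<in>J. cmod (w j) * norm (h j) * norm (z - z'))"
      by (rule order_trans[OF norm_sum sum_mono[OF plane_wave_lipschitz]])
    also have "\<dots> \<le> (\<Sum>j\<in>J. a j * b j) * dist z z'"
      unfolding sum_distrib_right dist_norm
      using w h a0 by (intro sum_mono mult_right_mono mult_mono) auto
    finally show ?thesis .
  qed
  moreover have "0 \<le> (\<Sum>j\<in>J. a j * b j)"
    using a0 b0 by (intro sum_nonneg) auto
  ultimately show "(\<Sum>j\<in>J. a j * b j)-lipschitz_on UNIV (\<lambda>z. Re (\<Sum>j\<in>J. w j * cis (z \<bullet> h j)))"
    by (intro lipschitz_onI) (auto simp: dist_real_def)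
  have "\<bar>Re (\<Sum>j\<in>J. w j * cis (z \<bullet> h j))\<bar> \<le> cmod (\<Sum>j\<in>J. w j * cis (z \<bullet> h j))"
    by (rule abs_Re_le_cmod)
  also have "\<dots> \<le> (\<Sum>j\<in>J. a j)"
    using w by (intro order_trans[OF norm_sum] sum_mono) (simp add: norm_mult)
  finally show "\<bar>Re (\<Sum>j\<in>J. w j * cis (z \<bullet> h j))\<bar> \<le> (\<Sum>j\<in>J. a j)" .
qed

text \<open>Every u in K is bounded and Lipschitz in the space variable, uniformly in time: the
  amplitudes and wave vectors of its plane waves are continuous and periodic in time, hence
  bounded.\<close>
lemma in_K_bounded_lipschitz:
  fixes u :: "real \<Rightarrow> 'h::real_inner \<Rightarrow> real"
  assumes "T > 0" and "in_K T DAs u"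
  obtains K Bd where "\<And>t. K-lipschitz_on UNIV (u t)" and "\<And>t z. \<bar>u t z\<bar> \<le> Bd"
proof -
  from assms(2)[unfolded in_K_def] obtain J and c :: "nat \<Rightarrow> complex"
    and \<Phi> :: "nat \<Rightarrow> real \<Rightarrow> real" and h :: "nat \<Rightarrow> real \<Rightarrow> 'h"
    where coeffs: "\<forall>j\<in>J. C1_fun (\<Phi> j) \<and> periodic T (\<Phi> j) \<and> C1_fun (h j) \<and> periodic T (h j)"
      and u_eq: "\<And>t z. u t z = Re (\<Sum>j\<in>J. c j * of_real (\<Phi> j t) * cis (z \<bullet> h j t))"
    by blast
  have "\<forall>j\<in>J. \<exists>P. \<forall>t. norm (\<Phi> j t) \<le> P" and "\<forall>j\<in>J. \<exists>H. \<forall>t. norm (h j t) \<le> H"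
    using coeffs periodic_continuous_bounded[OF assms(1) C1_fun_continuous] by blast+
  then obtain P H where P: "\<And>j t. j \<in> J \<Longrightarrow> \<bar>\<Phi> j t\<bar> \<le> P j"
    and H: "\<And>j t. j \<in> J \<Longrightarrow> norm (h j t) \<le> H j"
    by (metis real_norm_def)
  have amplitude: "cmod (c j * of_real (\<Phi> j t)) \<le> cmod (c j) * P j" if "j \<in> J" for j t
    unfolding norm_mult using P[OF that] by (intro mult_left_mono) auto
  have u_t: "u t = (\<lambda>z. Re (\<Sum>j\<in>J. (c j * of_real (\<Phi> j t)) * cis (z \<bullet> h j t)))" for t
    using u_eq by auto
  have "(\<Sum>j\<in>J. cmod (c j) * P j * H j)-lipschitz_on UNIV (u t)"
    and "\<bar>u t z\<bar> \<le> (\<Sum>j\<in>J. cmod (c j) * P j)" for t z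
    unfolding u_t using amplitude H by (intro wave_sum_bounded_lipschitz; blast)+
  then show thesis by (rule that)
qed

text \<open>A non-zero constant cannot turn a non-integrable function into an integrable one. Since
  the Bochner integral of a non-integrable function is 0, the integral of c + g therefore
  detects whether g is integrable.\<close>
lemma integral_const_plus:
  fixes g :: "'w \<Rightarrow> real"
  assumes "prob_space \<Omega>" and "c \<noteq> 0"
  shows "(\<integral>\<omega>. c + g \<omega> \<partial>\<Omega>) = (if integrable \<Omega> g then c + integral\<^sup>L \<Omega> g else 0)"
proof -
  interpret prob_space \<Omega> by fact
  show ?thesis
  proof (cases "integrable \<Omega> g")
    case True
    then show ?thesis by (simp add: prob_space)
  next
    case False
    have "\<not> integrable \<Omega> (\<lambda>\<omega>. c + g \<omega>)"
    proof
      assume "integrable \<Omega> (\<lambda>\<omega>. c + g \<omega>)"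
      then have "integrable \<Omega> (\<lambda>\<omega>. (c + g \<omega>) - c)"
        by (intro Bochner_Integration.integrable_diff) auto
      with False show False by simp
    qed
    with False show ?thesis by (simp add: not_integrable_integral_eq)
  qed
qed

text \<open>The identity expressing that averaging the laws of the random variables X y over y \<sim> \<mu>
  yields \<nu>, tested against bounded continuous functions. For X y the Ornstein-Uhlenbeck process
  started at y at time s, and \<mu>, \<nu> the measures of the system at times s < t, this is the
  defining identity of an evolution system of measures.\<close>
definition averages_to ::
  "'w measure \<Rightarrow> ('a \<Rightarrow> 'w \<Rightarrow> 'h::topological_space) \<Rightarrow> 'a measure \<Rightarrow> 'h measure \<Rightarrow> bool" where
  "averages_to \<Omega> X \<mu> \<nu> \<longleftrightarrow>
     (\<forall>\<phi>::'h \<Rightarrow> real. continuous_on UNIV \<phi> \<longrightarrow> bounded (range \<phi>) \<longrightarrow>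
        (\<integral>y. (\<integral>\<omega>. \<phi> (X y \<omega>) \<partial>\<Omega>) \<partial>\<mu>) = (\<integral>z. \<phi> z \<partial>\<nu>))"

lemma averages_toD:
  fixes \<phi> :: "'h::topological_space \<Rightarrow> real"
  shows "averages_to \<Omega> X \<mu> \<nu> \<Longrightarrow> continuous_on UNIV \<phi> \<Longrightarrow> bounded (range \<phi>) \<Longrightarrow>
     (\<integral>y. (\<integral>\<omega>. \<phi> (X y \<omega>) \<partial>\<Omega>) \<partial>\<mu>) = (\<integral>z. \<phi> z \<partial>\<nu>)"
  unfolding averages_to_def by blast

text \<open>The averaging identity forces the inner integrands to be integrable for \<mu>-almost every y:
  with the test functions 1 + \<phi> and 2 + \<phi>, the difference of the inner integrals is the
  indicator of the set of such y (by the previous lemma), and its \<mu>-integral is 1.\<close>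
lemma averages_to_AE_integrable:
  fixes \<phi> :: "'h::topological_space \<Rightarrow> real"
  assumes "prob_space \<Omega>" and "prob_space \<mu>" and "prob_space \<nu>" and sets_\<nu>: "sets \<nu> = sets borel"
    and avg: "averages_to \<Omega> X \<mu> \<nu>"
    and \<phi>_cont: "continuous_on UNIV \<phi>" and \<phi>_range: "\<And>z. 0 \<le> \<phi> z \<and> \<phi> z \<le> 1"
  shows "AE y in \<mu>. integrable \<Omega> (\<lambda>\<omega>. \<phi> (X y \<omega>))"
proof -
  interpret \<mu>: prob_space \<mu> by fact
  interpret \<nu>: prob_space \<nu> by fact
  define G where "G = {y. integrable \<Omega> (\<lambda>\<omega>. \<phi> (X y \<omega>))}"
  define a where "a = (\<integral>z. \<phi> z \<partial>\<nu>)"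
  have "\<phi> \<in> borel_measurable \<nu>"
    using borel_measurable_continuous_onI[OF \<phi>_cont] measurable_cong_sets[OF sets_\<nu> refl] by blast
  then have \<phi>_int: "integrable \<nu> \<phi>"
    using \<phi>_range by (intro \<nu>.integrable_const_bound[where B=1]) auto
  have "0 \<le> a" unfolding a_def using \<phi>_range by (simp add: integral_nonneg_AE)
  text \<open>For c \<ge> 1 the test function c + \<phi> has average c + a > 0; hence the y-integrand is
    integrable (otherwise its Bochner integral would vanish).\<close>
  have shifted: "integrable \<mu> (\<lambda>y. \<integral>\<omega>. c + \<phi> (X y \<omega>) \<partial>\<Omega>) \<and>
                 (\<integral>y. (\<integral>\<omega>. c + \<phi> (X y \<omega>) \<partial>\<Omega>) \<partial>\<mu>) = c + a" if "c \<ge> 1" for c :: real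
  proof -
    have "\<bar>c + \<phi> z\<bar> \<le> c + 1" for z using \<phi>_range[of z] that by arith
    then have "bounded (range (\<lambda>z. c + \<phi> z))" by (intro boundedI) auto
    with \<phi>_cont have "(\<integral>y. (\<integral>\<omega>. c + \<phi> (X y \<omega>) \<partial>\<Omega>) \<partial>\<mu>) = (\<integral>z. c + \<phi> z \<partial>\<nu>)"
      by (intro averages_toD[OF avg]) (auto intro: continuous_intros)
    also have "\<dots> = c + a" using \<phi>_int by (simp add: a_def \<nu>.prob_space)
    finally have "(\<integral>y. (\<integral>\<omega>. c + \<phi> (X y \<omega>) \<partial>\<Omega>) \<partial>\<mu>) = c + a" .
    moreover from this have "integrable \<mu> (\<lambda>y. \<integral>\<omega>. c + \<phi> (X y \<omega>) \<partial>\<Omega>)"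
      using \<open>0 \<le> a\<close> that not_integrable_integral_eq by fastforce
    ultimately show ?thesis by simp
  qed
  have indicator_G: "(\<lambda>y. (\<integral>\<omega>. 2 + \<phi> (X y \<omega>) \<partial>\<Omega>) - (\<integral>\<omega>. 1 + \<phi> (X y \<omega>) \<partial>\<Omega>)) = indicator G"
    by (rule ext) (simp add: integral_const_plus[OF assms(1)] G_def indicator_def)
  have "integrable \<mu> (indicator G :: _ \<Rightarrow> real)"
    unfolding indicator_G[symmetric] using shifted[of 1] shifted[of 2] by simp
  then have G_sets: "G \<inter> space \<mu> \<in> sets \<mu>" by (simp add: integrable_indicator_iff)
  have "(\<integral>y. indicator G y \<partial>\<mu>) = (1::real)"
    unfolding indicator_G[symmetric] using shifted[of 1] shifted[of 2] by simp
  also have "(\<integral>y. indicator G y \<partial>\<mu>) = \<mu>.prob (G \<inter> space \<mu>)"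
    by (simp add: indicator_inter_arith[symmetric])
  finally have "\<mu>.prob (G \<inter> space \<mu>) = 1" .
  then have "AE y in \<mu>. y \<in> G \<inter> space \<mu>" using \<mu>.AE_in_set_eq_1[OF G_sets] by simp
  then show ?thesis by (auto simp: G_def)
qed

text \<open>The stochastic integral is defined by choice, so its
  measurability is not available a priori; it follows from the averaging identity. Testing
  with continuous functions positive exactly on the sets of a countable basis, one finds a
  single point y0 for which all preimages under W y0 + S are measurable.\<close>
lemma averages_to_measurable:
  fixes W :: "'a \<Rightarrow> 'h::{real_normed_vector, second_countable_topology}" and S :: "'w \<Rightarrow> 'h"
  assumes "prob_space \<Omega>" and "prob_space \<mu>" and "prob_space \<nu>" and "sets \<nu> = sets borel"
    and avg: "averages_to \<Omega> (\<lambda>y \<omega>. W y + S \<omega>) \<mu> \<nu>"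
  shows "S \<in> borel_measurable \<Omega>"
proof -
  interpret \<mu>: prob_space \<mu> by fact
  obtain \<B> :: "'h set set" where "countable \<B>" and basis: "topological_basis \<B>"
    using ex_countable_basis by blast
  text \<open>Continuous [0,1]-valued functions whose positivity set is a given open set.\<close>
  define \<psi> where "\<psi> b z = min 1 (infdist z (- b))" for b :: "'h set" and z
  have \<psi>_cont: "continuous_on UNIV (\<psi> b)" for b unfolding \<psi>_def by (intro continuous_intros)
  have \<psi>_range: "0 \<le> \<psi> b z \<and> \<psi> b z \<le> 1" for b z unfolding \<psi>_def by (simp add: infdist_nonneg)
  have AE_integrable: "AE y in \<mu>. \<forall>b\<in>\<B>. integrable \<Omega> (\<lambda>\<omega>. \<psi> b (W y + S \<omega>))"
    using \<open>countable \<B>\<close>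
    by (subst AE_ball_countable) (auto intro!: averages_to_AE_integrable[OF assms(1-4) avg \<psi>_cont \<psi>_range])
  have "\<exists>y. \<forall>b\<in>\<B>. integrable \<Omega> (\<lambda>\<omega>. \<psi> b (W y + S \<omega>))"
  proof (rule ccontr)
    assume "\<nexists>y. \<forall>b\<in>\<B>. integrable \<Omega> (\<lambda>\<omega>. \<psi> b (W y + S \<omega>))"
    with AE_integrable have "AE y in \<mu>. False" by (elim AE_mp) (auto intro!: AE_I2)
    then show False using \<mu>.AE_False by simp
  qed
  then obtain y0 where "\<forall>b\<in>\<B>. integrable \<Omega> (\<lambda>\<omega>. \<psi> b (W y0 + S \<omega>))" by blast
  then have \<psi>_meas: "(\<lambda>\<omega>. \<psi> b (W y0 + S \<omega>)) \<in> borel_measurable \<Omega>" if "b \<in> \<B>" for b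
    using that by blast
  have "(\<lambda>\<omega>. W y0 + S \<omega>) \<in> borel_measurable \<Omega>"
  proof (subst borel_eq_countable_basis[OF \<open>countable \<B>\<close> basis], rule measurable_measure_of)
    fix b assume b: "b \<in> \<B>"
    show "(\<lambda>\<omega>. W y0 + S \<omega>) -` b \<inter> space \<Omega> \<in> sets \<Omega>"
    proof (cases "b = UNIV")
      case False
      then have nonempty: "- b \<noteq> {}" by auto
      have closed: "closure (- b) = - b"
        using topological_basis_open[OF basis b] by (simp add: closed_open)
      have "(\<lambda>\<omega>. W y0 + S \<omega>) -` b \<inter> space \<Omega> = {\<omega>\<in>space \<Omega>. \<psi> b (W y0 + S \<omega>) > 0}"
        using in_closure_iff_infdist_zero[OF nonempty] closed infdist_nonneg
        unfolding \<psi>_def by (auto simp: order_le_less) (metis less_irrefl)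
      also have "\<dots> \<in> sets \<Omega>"
        using \<psi>_meas[OF b] by (rule borel_measurable_less[OF borel_measurable_const])
      finally show ?thesis .
    qed simp
  qed auto
  then have "(\<lambda>\<omega>. (W y0 + S \<omega>) - W y0) \<in> borel_measurable \<Omega>" by measurable
  then show ?thesis by simp
qed

lemma lipschitz_deviation_from_mean:
  fixes g :: "'h::{real_normed_vector, second_countable_topology} \<Rightarrow> real"
  assumes "prob_space \<mu>" and sets_\<mu>: "sets \<mu> = sets borel"
    and lip: "L-lipschitz_on UNIV g" and norm_int: "integrable \<mu> norm"
  shows "\<bar>g x - (\<integral>y. g y \<partial>\<mu>)\<bar> \<le> L * (norm x + (\<integral>y. norm y \<partial>\<mu>))"
proof -
  interpret prob_space \<mu> by fact
  have L: "0 \<le> L" and g_lip: "\<And>y y'. \<bar>g y - g y'\<bar> \<le> L * norm (y - y')"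
    using lip by (auto simp: lipschitz_on_def dist_norm dist_real_def)
  have g_meas: "g \<in> borel_measurable \<mu>"
    using borel_measurable_continuous_onI[OF lipschitz_on_continuous_on[OF lip]]
      measurable_cong_sets[OF sets_\<mu> refl] by blast
  have g_growth: "norm (g y) \<le> norm (\<bar>g 0\<bar> + L * norm y)" for y
    using g_lip[of y 0] L by simp
  have "integrable \<mu> (\<lambda>y. \<bar>g 0\<bar> + L * norm y)" using norm_int by simp
  then have g_int: "integrable \<mu> g"
    by (rule Bochner_Integration.integrable_bound) (use g_meas g_growth in auto)
  have "\<bar>g x - (\<integral>y. g y \<partial>\<mu>)\<bar> = \<bar>\<integral>y. g x - g y \<partial>\<mu>\<bar>"
    using g_int by (simp add: prob_space)
  also have "\<dots> \<le> (\<integral>y. \<bar>g x - g y\<bar> \<partial>\<mu>)"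
    using integral_norm_bound[of \<mu> "\<lambda>y. g x - g y"] by simp
  also have "\<dots> \<le> (\<integral>y. L * norm x + L * norm y \<partial>\<mu>)"
  proof (rule integral_mono)
    fix y
    have "\<bar>g x - g y\<bar> \<le> L * norm (x - y)" by (rule g_lip)
    also have "\<dots> \<le> L * (norm x + norm y)"
      using L norm_triangle_ineq4[of x y] by (intro mult_left_mono) auto
    finally show "\<bar>g x - g y\<bar> \<le> L * norm x + L * norm y" by (simp add: algebra_simps)
  qed (use g_int norm_int in auto)
  also have "\<dots> = L * (norm x + (\<integral>y. norm y \<partial>\<mu>))"
    using norm_int by (simp add: prob_space distrib_left)
  finally show ?thesis .
qed

lemma expectation_lipschitz:
  fixes W :: "'a::real_normed_vector \<Rightarrow>\<^sub>L 'h::{real_normed_vector, second_countable_topology}"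
    and S :: "'w \<Rightarrow> 'h" and \<phi> :: "'h \<Rightarrow> real"
  assumes "prob_space \<Omega>" and S_meas: "S \<in> borel_measurable \<Omega>"
    and lip: "K-lipschitz_on UNIV \<phi>" and bounded: "\<And>z. \<bar>\<phi> z\<bar> \<le> Bd"
  shows "(K * norm W)-lipschitz_on UNIV (\<lambda>y. \<integral>\<omega>. \<phi> (W y + S \<omega>) \<partial>\<Omega>)"
proof (rule lipschitz_onI)
  interpret prob_space \<Omega> by fact
  have K: "0 \<le> K" and \<phi>_lip: "\<And>z z'. \<bar>\<phi> z - \<phi> z'\<bar> \<le> K * norm (z - z')"
    using lip by (auto simp: lipschitz_on_def dist_norm dist_real_def)
  show "0 \<le> K * norm W" using K by simp
  have integrable: "integrable \<Omega> (\<lambda>\<omega>. \<phi> (W y + S \<omega>))" for y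
  proof (rule integrable_const_bound[where B=Bd])
    have "(\<lambda>\<omega>. W y + S \<omega>) \<in> borel_measurable \<Omega>" using S_meas by measurable
    then show "(\<lambda>\<omega>. \<phi> (W y + S \<omega>)) \<in> borel_measurable \<Omega>"
      by (rule borel_measurable_continuous_on[OF lipschitz_on_continuous_on[OF lip]])
  qed (use bounded in auto)
  fix y y'
  have "dist (\<integral>\<omega>. \<phi> (W y + S \<omega>) \<partial>\<Omega>) (\<integral>\<omega>. \<phi> (W y' + S \<omega>) \<partial>\<Omega>)
      = \<bar>\<integral>\<omega>. \<phi> (W y + S \<omega>) - \<phi> (W y' + S \<omega>) \<partial>\<Omega>\<bar>"
    using integrable by (simp add: dist_real_def)
  also have "\<dots> \<le> (\<integral>\<omega>. \<bar>\<phi> (W y + S \<omega>) - \<phi> (W y' + S \<omega>)\<bar> \<partial>\<Omega>)"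
    using integral_norm_bound[of \<Omega> "\<lambda>\<omega>. \<phi> (W y + S \<omega>) - \<phi> (W y' + S \<omega>)"] by simp
  also have "\<dots> \<le> (\<integral>\<omega>. K * norm W * dist y y' \<partial>\<Omega>)"
  proof (rule integral_mono)
    fix \<omega>
    have "\<bar>\<phi> (W y + S \<omega>) - \<phi> (W y' + S \<omega>)\<bar> \<le> K * norm (W (y - y'))"
      using \<phi>_lip[of "W y + S \<omega>" "W y' + S \<omega>"] by (simp add: blinfun.diff_right)
    also have "\<dots> \<le> K * (norm W * dist y y')"
      using K norm_blinfun[of W "y - y'"] by (intro mult_left_mono) (auto simp: dist_norm)
    finally show "\<bar>\<phi> (W y + S \<omega>) - \<phi> (W y' + S \<omega>)\<bar> \<le> K * norm W * dist y y'"
      by (simp add: mult.assoc)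
  qed (use integrable in auto)
  also have "\<dots> = K * norm W * dist y y'" by (simp add: prob_space)
  finally show "dist (\<integral>\<omega>. \<phi> (W y + S \<omega>) \<partial>\<Omega>) (\<integral>\<omega>. \<phi> (W y' + S \<omega>) \<partial>\<Omega>)
      \<le> K * norm W * dist y y'" .
qed

lemma averages_to_deviation_bound:
  fixes W :: "'h \<Rightarrow>\<^sub>L 'h::{real_normed_vector, second_countable_topology}"
    and S :: "'w \<Rightarrow> 'h" and \<phi> :: "'h \<Rightarrow> real"
  assumes "prob_space \<Omega>" and "prob_space \<mu>" and "sets \<mu> = sets borel"
    and "prob_space \<nu>" and "sets \<nu> = sets borel"
    and avg: "averages_to \<Omega> (\<lambda>y \<omega>. W y + S \<omega>) \<mu> \<nu>"
    and lip: "K-lipschitz_on UNIV \<phi>" and bounded: "\<And>z. \<bar>\<phi> z\<bar> \<le> Bd"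
    and "integrable \<mu> norm"
  shows "\<bar>(\<integral>\<omega>. \<phi> (W x + S \<omega>) \<partial>\<Omega>) - (\<integral>z. \<phi> z \<partial>\<nu>)\<bar>
           \<le> K * norm W * (norm x + (\<integral>y. norm y \<partial>\<mu>))"
proof -
  have "S \<in> borel_measurable \<Omega>"
    using assms(1,2,4,5) avg by (rule averages_to_measurable)
  then have "(K * norm W)-lipschitz_on UNIV (\<lambda>y. \<integral>\<omega>. \<phi> (W y + S \<omega>) \<partial>\<Omega>)"
    using assms(1) lip bounded by (intro expectation_lipschitz)
  then have "\<bar>(\<integral>\<omega>. \<phi> (W x + S \<omega>) \<partial>\<Omega>) - (\<integral>y. (\<integral>\<omega>. \<phi> (W y + S \<omega>) \<partial>\<Omega>) \<partial>\<mu>)\<bar>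
           \<le> K * norm W * (norm x + (\<integral>y. norm y \<partial>\<mu>))"
    using assms(2,3,9) by (intro lipschitz_deviation_from_mean)
  moreover have "(\<integral>y. (\<integral>\<omega>. \<phi> (W y + S \<omega>) \<partial>\<Omega>) \<partial>\<mu>) = (\<integral>z. \<phi> z \<partial>\<nu>)"
    using avg lipschitz_on_continuous_on[OF lip] bounded
    by (intro averages_toD) (auto simp: bounded_iff)
  ultimately show ?thesis by simp
qed

lemma uniform_first_moment:
  fixes \<nu> :: "'i \<Rightarrow> 'h::{real_normed_vector, second_countable_topology} measure"
  assumes sets_\<nu>: "\<And>t. sets (\<nu> t) = sets borel"
    and moment: "(SUP t. \<integral>\<^sup>+y. ennreal (norm y) \<partial>\<nu> t) < \<infinity>"
  obtains M where "\<And>t. integrable (\<nu> t) norm" and "\<And>t. (\<integral>y. norm y \<partial>\<nu> t) \<le> M"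
proof
  define S where "S = (SUP t. \<integral>\<^sup>+y. ennreal (norm y) \<partial>\<nu> t)"
  fix t
  have le_S: "(\<integral>\<^sup>+y. ennreal (norm y) \<partial>\<nu> t) \<le> S" unfolding S_def by (rule SUP_upper) simp
  have "norm \<in> borel_measurable (\<nu> t)"
    by (subst measurable_cong_sets[OF sets_\<nu> refl]) simp
  then show integrable: "integrable (\<nu> t) norm"
    using le_S moment unfolding S_def by (intro integrableI_bounded) auto
  have "ennreal (\<integral>y. norm y \<partial>\<nu> t) = (\<integral>\<^sup>+y. ennreal (norm y) \<partial>\<nu> t)"
    using integrable by (intro nn_integral_eq_integral[symmetric]) auto
  with le_S have "ennreal (\<integral>y. norm y \<partial>\<nu> t) \<le> S" by simp
  then have "enn2real (ennreal (\<integral>y. norm y \<partial>\<nu> t)) \<le> enn2real S"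
    using moment unfolding S_def by (intro enn2real_mono) auto
  then show "(\<integral>y. norm y \<partial>\<nu> t) \<le> enn2real S" by simp
qed

lemma evolution_system_averages_to:
  fixes L :: "real \<Rightarrow> 'w \<Rightarrow> 'h::{real_inner, complete_space, second_countable_topology}"
  assumes "evolution_system_of_measures \<Omega> L U f B \<nu>" and "s < t"
  shows "averages_to \<Omega> (\<lambda>y \<omega>. U t s y + (integral {s..t} (\<lambda>r. U t r (f r))
            + stoch_int \<Omega> L (\<lambda>r. U t r o\<^sub>L B r) s t \<omega>)) (\<nu> s) (\<nu> t)"
proof -
  have "(\<integral>y. trans_op \<Omega> L U f B s t \<phi> y \<partial>\<nu> s) = (\<integral>y. \<phi> y \<partial>\<nu> t)"
    if "continuous_on UNIV \<phi>" and "bounded (range \<phi>)" for \<phi> :: "'h \<Rightarrow> real"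
    using assms that unfolding evolution_system_of_measures_def by blast
  then show ?thesis
    unfolding averages_to_def trans_op_def OU_proc_def add.assoc by blast
qed

lemma P_tau_deviation_bound:
  fixes L :: "real \<Rightarrow> 'w \<Rightarrow> 'h::{real_inner, complete_space, second_countable_topology}"
    and u :: "real \<Rightarrow> 'h \<Rightarrow> real"
  assumes "prob_space \<Omega>" and esm: "evolution_system_of_measures \<Omega> L U f B \<nu>"
    and U_exp: "\<forall>s t. s \<le> t \<longrightarrow> norm (U t s) \<le> c * exp (- \<omega> * (t - s))"
    and norm_int: "\<And>t. integrable (\<nu> t) norm" and moment: "\<And>t. (\<integral>y. norm y \<partial>\<nu> t) \<le> M"
    and lip: "\<And>t. K-lipschitz_on UNIV (u t)" and bounded: "\<And>t z. \<bar>u t z\<bar> \<le> Bd"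
    and "\<tau> > 0"
  shows "\<bar>P_tau \<Omega> L U f B \<tau> u t x - (\<integral>y. u (t + \<tau>) y \<partial>\<nu> (t + \<tau>))\<bar>
           \<le> K * (c * exp (- \<omega> * \<tau>)) * (norm x + M)"
proof -
  have \<nu>: "prob_space (\<nu> s)" "sets (\<nu> s) = sets borel" for s
    using esm unfolding evolution_system_of_measures_def by blast+
  have "\<bar>P_tau \<Omega> L U f B \<tau> u t x - (\<integral>y. u (t + \<tau>) y \<partial>\<nu> (t + \<tau>))\<bar>
          \<le> K * norm (U (t + \<tau>) t) * (norm x + (\<integral>y. norm y \<partial>\<nu> t))"
    unfolding P_tau_def trans_op_def OU_proc_def add.assoc
    using evolution_system_averages_to[OF esm, of t "t + \<tau>"] \<open>\<tau> > 0\<close>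
    by (intro averages_to_deviation_bound[OF assms(1) \<nu> \<nu> _ lip bounded norm_int]) auto
  also have "\<dots> \<le> K * (c * exp (- \<omega> * \<tau>)) * (norm x + M)"
  proof (intro mult_mono mult_left_mono add_left_mono)
    show decay: "norm (U (t + \<tau>) t) \<le> c * exp (- \<omega> * \<tau>)"
      using U_exp \<open>\<tau> > 0\<close> by (metis add_diff_cancel_left' less_add_same_cancel1 less_imp_le)
    show "0 \<le> K" using lip[of 0] by (simp add: lipschitz_on_def)
    then show "0 \<le> K * (c * exp (- \<omega> * \<tau>))"
      using order_trans[OF norm_ge_zero decay] by simp
    show "0 \<le> norm x + (\<integral>y. norm y \<partial>\<nu> t)" by (simp add: integral_nonneg_AE)
  qed (use moment in auto)
  finally show ?thesis .
qed

lemma SUP_abs_tendsto_zero: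
  fixes g :: "real \<Rightarrow> 'i \<Rightarrow> real"
  assumes "\<omega> > 0" and bound: "\<And>\<tau> i. \<tau> > 0 \<Longrightarrow> \<bar>g \<tau> i\<bar> \<le> C * exp (- \<omega> * \<tau>)"
  shows "((\<lambda>\<tau>. SUP i. \<bar>g \<tau> i\<bar>) \<longlongrightarrow> 0) at_top"
proof (rule tendsto_sandwich)
  have SUP_bounds: "0 \<le> (SUP i. \<bar>g \<tau> i\<bar>) \<and> (SUP i. \<bar>g \<tau> i\<bar>) \<le> C * exp (- \<omega> * \<tau>)"
    if "\<tau> > 0" for \<tau>
  proof
    have "bdd_above (range (\<lambda>i. \<bar>g \<tau> i\<bar>))" using bound[OF that] by (intro bdd_aboveI2) auto
    then show "0 \<le> (SUP i. \<bar>g \<tau> i\<bar>)"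
      by (meson UNIV_I abs_ge_zero cSUP_upper order_trans)
    show "(SUP i. \<bar>g \<tau> i\<bar>) \<le> C * exp (- \<omega> * \<tau>)"
      using bound[OF that] by (intro cSUP_least) auto
  qed
  show "\<forall>\<^sub>F \<tau> in at_top. 0 \<le> (SUP i. \<bar>g \<tau> i\<bar>)"
    using eventually_gt_at_top[of "0::real"] by (rule eventually_mono) (use SUP_bounds in blast)
  show "\<forall>\<^sub>F \<tau> in at_top. (SUP i. \<bar>g \<tau> i\<bar>) \<le> C * exp (- \<omega> * \<tau>)"
    using eventually_gt_at_top[of "0::real"] by (rule eventually_mono) (use SUP_bounds in blast)
  have "LIM \<tau> at_top. - \<omega> * \<tau> :> at_bot"
    using \<open>\<omega> > 0\<close> by (intro filterlim_tendsto_neg_mult_at_bot[OF tendsto_const _ filterlim_ident]) simp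
  then have "((\<lambda>\<tau>. exp (- \<omega> * \<tau>)) \<longlongrightarrow> 0) at_top"
    by (rule filterlim_compose[OF exp_at_bot])
  then show "((\<lambda>\<tau>. C * exp (- \<omega> * \<tau>)) \<longlongrightarrow> 0) at_top"
    using tendsto_mult_right_zero by blast
qed simp

theorem mainTheorem15:
  fixes \<Omega> :: "'w measure"
    and L :: "real \<Rightarrow> 'w \<Rightarrow> 'h::{real_inner, complete_space, second_countable_topology}"
    and T c \<omega> :: real
    and f :: "real \<Rightarrow> 'h"
    and B :: "real \<Rightarrow> 'h \<Rightarrow>\<^sub>L 'h"
    and DA :: "'h set" and A :: "real \<Rightarrow> 'h \<Rightarrow> 'h"
    and DAs :: "'h set" and As :: "real \<Rightarrow> 'h \<Rightarrow> 'h"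
    and U :: "real \<Rightarrow> real \<Rightarrow> 'h \<Rightarrow>\<^sub>L 'h"
    and \<nu> :: "real \<Rightarrow> 'h measure"
    and u :: "real \<Rightarrow> 'h \<Rightarrow> real"
    and x :: 'h
  assumes T_pos: "T > 0"
    and levy: "levy_process \<Omega> L"
    and levy_moment: "(\<integral>\<^sup>+y\<in>{y. norm y > 1}. ennreal (norm y) \<partial>levy_measure \<Omega> L) < \<infinity>"
    and f_cont: "continuous_on UNIV f" and f_per: "periodic T f"
    and B_strong: "\<forall>y. continuous_on UNIV (\<lambda>t. B t y)"
    and B_bdd: "\<exists>C. \<forall>t. norm (B t) \<le> C"
    and B_per: "periodic T B"
    and A_per: "periodic T A"
    and DA_dense: "closure DA = UNIV"
    and U_id: "\<forall>t. U t t = id_blinfun"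
    and U_comp: "\<forall>s r t. s \<le> r \<longrightarrow> r \<le> t \<longrightarrow> U t r o\<^sub>L U r s = U t s"
    and U_strong: "\<forall>y. continuous_on {(t, s). s \<le> t} (\<lambda>(t, s). U t s y)"
    and U_gen: "\<forall>s t y. s \<le> t \<longrightarrow> y \<in> DA \<longrightarrow> U t s y \<in> DA \<and>
                  ((\<lambda>r. U r s y) has_vector_derivative A t (U t s y)) (at t within {s..})"
    and U_per: "\<forall>t s. U (t + T) (s + T) = U t s"
    and U_exp: "c > 0" "\<omega> > 0" "\<forall>s t. s \<le> t \<longrightarrow> norm (U t s) \<le> c * exp (- \<omega> * (t - s))"
    and As_adj: "\<forall>t. \<forall>y\<in>DAs. \<forall>z\<in>DA. A t z \<bullet> y = z \<bullet> As t y"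
    and DAs_def: "\<forall>t. DAs = {y. \<exists>w. \<forall>z\<in>DA. A t z \<bullet> y = z \<bullet> w}"
    and DAs_dense: "closure DAs = UNIV"
    and U_adj_inv: "\<forall>s t. s \<le> t \<longrightarrow> adjoint (blinfun_apply (U t s)) ` DAs \<subseteq> DAs"
    and U_adj_deriv: "\<forall>s t y. s \<le> t \<longrightarrow> y \<in> DAs \<longrightarrow>
        ((\<lambda>r. adjoint (blinfun_apply (U r s)) y) has_vector_derivative
            adjoint (blinfun_apply (U t s)) (As t y)) (at t within {s..})"
    and esm: "evolution_system_of_measures \<Omega> L U f B \<nu>"
    and \<nu>_per: "periodic T \<nu>"
    and moment: "(SUP t. \<integral>\<^sup>+y. ennreal (norm y) \<partial>\<nu> t) < \<infinity>"
    and uK: "in_K T DAs u"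
  shows "((\<lambda>\<tau>. SUP t. \<bar>P_tau \<Omega> L U f B \<tau> u t x - (\<integral>y. u (t + \<tau>) y \<partial>\<nu> (t + \<tau>))\<bar>) \<longlongrightarrow> 0) at_top"
proof -
  have "prob_space \<Omega>" using levy unfolding levy_process_def by blast
  have "sets (\<nu> t) = sets borel" for t
    using esm unfolding evolution_system_of_measures_def by blast
  then obtain M where norm_int: "\<And>t. integrable (\<nu> t) norm" and M: "\<And>t. (\<integral>y. norm y \<partial>\<nu> t) \<le> M"
    using uniform_first_moment[OF _ moment] by blast
  obtain K Bd where lip: "\<And>t. K-lipschitz_on UNIV (u t)" and bounded: "\<And>t z. \<bar>u t z\<bar> \<le> Bd"
    using in_K_bounded_lipschitz[OF T_pos uK] by blast
  have "\<bar>P_tau \<Omega> L U f B \<tau> u t x - (\<integral>y. u (t + \<tau>) y \<partial>\<nu> (t + \<tau>))\<bar>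
          \<le> (K * c * (norm x + M)) * exp (- \<omega> * \<tau>)" if "\<tau> > 0" for \<tau> t
    using P_tau_deviation_bound[OF \<open>prob_space \<Omega>\<close> esm U_exp(3) norm_int M lip bounded that]
    by (simp add: mult_ac)
  then show ?thesis by (rule SUP_abs_tendsto_zero[OF U_exp(2)])
qed

end
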